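(* Let $d\geq1$ and let $f:[0,1]^d\to\mathbb{R}_+$ be the function computed by some ReLU net with input dimension $d$, output dimension $1$ and arbitrary width. Then there exist affine functions $g_\alpha,h_\beta:[0,1]^d\to\mathbb{R}$ ($1\leq\alpha\leq N$, $1\leq\beta\leq M$) such that $f$ can be written as the difference of positive convex functions $$f=g-h,\qquad g:=\max_{1\leq\alpha\leq N}g_\alpha,\qquad h:=\max_{1\leq\beta\leq M}h_\beta.$$ Moreover, there exists a ReLU net $\mathcal N$ with input dimension $d$, hidden layer width $d+3$, output dimension $1$ and $\mathrm{depth}(\mathcal N)=2(M+N)$ that computes $f$ exactly on $[0,1]^d$. Finally, if $f$ is convex (so that $h$ vanishes and $f=\max_{1\leq\alpha\leq N}g_\alpha$), then the width of $\mathcal N$ can be taken to be $d+1$ and the depth can be taken to be $N$.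
   Context: For $m\geq1$, $\mathrm{ReLU}(x_1,\dots,x_m)=(\max\{0,x_1\},\dots,\max\{0,x_m\})$. A feed-forward ReLU net $\mathcal N$ with input dimension $d_{\mathrm{in}}$, hidden layer width $w$, depth $n$ and output dimension $d_{\mathrm{out}}$ is a function of the form $f_{\mathcal N}=\mathrm{ReLU}\circ A_n\circ\mathrm{ReLU}\circ A_{n-1}\circ\cdots\circ\mathrm{ReLU}\circ A_1$, mapping $\mathbb{R}^{d_{\mathrm{in}}}$ to $\mathbb{R}_+^{d_{\mathrm{out}}}$, where $A_1:\mathbb{R}^{d_{\mathrm{in}}}\to\mathbb{R}^w$, $A_j:\mathbb{R}^w\to\mathbb{R}^w$ ($2\leq j\leq n-1$), $A_n:\mathbb{R}^w\to\mathbb{R}^{d_{\mathrm{out}}}$ are affine maps. *)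

theory Defs
  imports Main "HOL-Library.Extended_Real"
begin

text \<open>Vectors of R^m are represented as functions nat => real; only the coordinates
  i < m are meaningful. An affine map R^m -> R^k is given by a weight matrix W and a bias b.\<close>

type_synonym layer = "(nat \<Rightarrow> nat \<Rightarrow> real) \<times> (nat \<Rightarrow> real)"

definition affine_map :: "nat \<Rightarrow> nat \<Rightarrow> layer \<Rightarrow> (nat \<Rightarrow> real) \<Rightarrow> (nat \<Rightarrow> real)" where
  "affine_map m k L x = (\<lambda>i. if i < k then (\<Sum>j<m. fst L i j * x j) + snd L i else 0)"

definition relu :: "(nat \<Rightarrow> real) \<Rightarrow> (nat \<Rightarrow> real)" where
  "relu v = (\<lambda>i. max 0 (v i))"

fun eval_net :: "nat \<Rightarrow> nat \<Rightarrow> nat \<Rightarrow> layer list \<Rightarrow> (nat \<Rightarrow> real) \<Rightarrow> (nat \<Rightarrow> real)" where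
  "eval_net m w dout [] x = x"
| "eval_net m w dout [L] x = relu (affine_map m dout L x)"
| "eval_net m w dout (L # L' # Ls) x = eval_net w w dout (L' # Ls) (relu (affine_map m w L x))"

definition unit_cube :: "nat \<Rightarrow> (nat \<Rightarrow> real) set" where
  "unit_cube d = {x. (\<forall>i<d. 0 \<le> x i \<and> x i \<le> 1) \<and> (\<forall>i\<ge>d. x i = 0)}"

definition relu_net_computes :: "nat \<Rightarrow> nat \<Rightarrow> nat \<Rightarrow> ((nat \<Rightarrow> real) \<Rightarrow> real) \<Rightarrow> bool" where
  "relu_net_computes d w n f \<longleftrightarrow>
     (\<exists>Ls. length Ls = n \<and> n \<ge> 1 \<and> (\<forall>x\<in>unit_cube d. f x = eval_net d w 1 Ls x 0))"

definition affine_fun :: "nat \<Rightarrow> (nat \<Rightarrow> real) \<Rightarrow> real \<Rightarrow> (nat \<Rightarrow> real) \<Rightarrow> real" where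
  "affine_fun d a c x = (\<Sum>i<d. a i * x i) + c"

definition max_affine :: "nat \<Rightarrow> nat \<Rightarrow> (nat \<Rightarrow> nat \<Rightarrow> real) \<Rightarrow> (nat \<Rightarrow> real) \<Rightarrow> (nat \<Rightarrow> real) \<Rightarrow> real" where
  "max_affine d N a c x = Max ((\<lambda>\<alpha>. affine_fun d (a \<alpha>) (c \<alpha>) x) ` {1..N})"

definition convex_on_cube :: "nat \<Rightarrow> ((nat \<Rightarrow> real) \<Rightarrow> real) \<Rightarrow> bool" where
  "convex_on_cube d f \<longleftrightarrow> (\<forall>x\<in>unit_cube d. \<forall>y\<in>unit_cube d. \<forall>t::real. 0 \<le> t \<and> t \<le> 1 \<longrightarrow>
      f (\<lambda>i. t * x i + (1 - t) * y i) \<le> t * f x + (1 - t) * f y)"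

end

theory Submission
  imports Defs
begin

(* The outputs of ReLU nets are differences of two max-affine functions: this class contains
   the coordinates and is closed under sums, scalar multiples and x \<mapsto> max 0 x, and adding a
   common constant to both parts makes them nonnegative on the cube. Conversely max 0 (g - h)
   is computed by a net of width d + 2 that carries x along and reads one affine piece of g or h
   per hidden layer, keeping the two running maxima in two extra units. If f is moreover convex,
   then near every point there is a small box on which f coincides with a difference p - q of
   pieces, and convexity makes p - q a supporting affine minorant of f; the maximum of these
   minorants is then f on a dense, closed subset of the cube, hence everywhere. *)

type_synonym piece = "(nat \<Rightarrow> real) \<times> real"

definition aff :: "nat \<Rightarrow> piece \<Rightarrow> (nat \<Rightarrow> real) \<Rightarrow> real" where
  "aff d p x = (\<Sum>i<d. fst p i * x i) + snd p"

definition max_aff :: "nat \<Rightarrow> piece list \<Rightarrow> (nat \<Rightarrow> real) \<Rightarrow> real" where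
  "max_aff d ps x = Max ((\<lambda>p. aff d p x) ` set ps)"

definition zero_piece :: piece where
  "zero_piece = (\<lambda>_. 0, 0)"

definition piece_add :: "piece \<Rightarrow> piece \<Rightarrow> piece" where
  "piece_add p q = (\<lambda>i. fst p i + fst q i, snd p + snd q)"

definition piece_diff :: "piece \<Rightarrow> piece \<Rightarrow> piece" where
  "piece_diff p q = (\<lambda>i. fst p i - fst q i, snd p - snd q)"

definition piece_scale :: "real \<Rightarrow> piece \<Rightarrow> piece" where
  "piece_scale c p = (\<lambda>i. c * fst p i, c * snd p)"

definition piece_shift :: "real \<Rightarrow> piece \<Rightarrow> piece" where
  "piece_shift K p = (fst p, snd p + K)"

lemma aff_zero_piece [simp]: "aff d zero_piece x = 0"
  by (simp add: aff_def zero_piece_def)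

lemma aff_piece_add: "aff d (piece_add p q) x = aff d p x + aff d q x"
  unfolding aff_def piece_add_def by (simp add: distrib_right sum.distrib)

lemma aff_piece_diff: "aff d (piece_diff p q) x = aff d p x - aff d q x"
  unfolding aff_def piece_diff_def by (simp add: left_diff_distrib sum_subtractf)

lemma aff_piece_scale: "aff d (piece_scale c p) x = c * aff d p x"
  unfolding aff_def piece_scale_def by (simp add: distrib_left sum_distrib_left mult.assoc)

lemma aff_piece_shift: "aff d (piece_shift K p) x = aff d p x + K"
  unfolding aff_def piece_shift_def by simp

lemma aff_convex_comb:
  "aff d p (\<lambda>i. t * y i + (1 - t) * z i) = t * aff d p y + (1 - t) * aff d p z"
proof -
  have "(\<Sum>i<d. fst p i * (t * y i + (1 - t) * z i))
      = (\<Sum>i<d. t * (fst p i * y i) + (1 - t) * (fst p i * z i))"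
    by (rule sum.cong) (auto simp: algebra_simps)
  also have "\<dots> = t * (\<Sum>i<d. fst p i * y i) + (1 - t) * (\<Sum>i<d. fst p i * z i)"
    by (simp add: sum.distrib sum_distrib_left)
  finally show ?thesis unfolding aff_def by (simp add: algebra_simps)
qed

lemma max_aff_ge: "p \<in> set ps \<Longrightarrow> aff d p x \<le> max_aff d ps x"
  unfolding max_aff_def by (rule Max_ge) auto

lemma max_aff_attained: "ps \<noteq> [] \<Longrightarrow> \<exists>p\<in>set ps. max_aff d ps x = aff d p x"
proof -
  assume "ps \<noteq> []"
  then have "max_aff d ps x \<in> (\<lambda>p. aff d p x) ` set ps"
    unfolding max_aff_def by (intro Max_in) auto
  then show ?thesis by auto
qed

lemma max_aff_le: "ps \<noteq> [] \<Longrightarrow> (\<And>p. p \<in> set ps \<Longrightarrow> aff d p x \<le> B) \<Longrightarrow> max_aff d ps x \<le> B"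
  using max_aff_attained by metis

lemma max_aff_cong_set: "set ps = set qs \<Longrightarrow> max_aff d ps x = max_aff d qs x"
  unfolding max_aff_def by simp

lemma max_aff_single [simp]: "max_aff d [p] x = aff d p x"
  unfolding max_aff_def by simp

lemma max_aff_append:
  "ps \<noteq> [] \<Longrightarrow> qs \<noteq> [] \<Longrightarrow> max_aff d (ps @ qs) x = max (max_aff d ps x) (max_aff d qs x)"
  unfolding max_aff_def by (simp add: image_Un Max_Un)

lemma max_aff_map_mono:
  assumes "ps \<noteq> []" "mono T" "\<And>p. aff d (g p) x = T (aff d p x)"
  shows "max_aff d (map g ps) x = T (max_aff d ps x)"
proof (rule antisym)
  show "max_aff d (map g ps) x \<le> T (max_aff d ps x)"
    using assms by (auto intro!: max_aff_le monoD[OF assms(2)] max_aff_ge)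
  obtain p where "p \<in> set ps" "max_aff d ps x = aff d p x"
    using max_aff_attained[OF assms(1)] by blast
  then show "T (max_aff d ps x) \<le> max_aff d (map g ps) x"
    using assms(3) by (metis image_eqI list.set_map max_aff_ge)
qed

lemma max_aff_shift:
  "ps \<noteq> [] \<Longrightarrow> max_aff d (map (piece_shift K) ps) x = max_aff d ps x + K"
  by (rule max_aff_map_mono) (auto simp: mono_def aff_piece_shift)

definition sum_pieces :: "piece list \<Rightarrow> piece list \<Rightarrow> piece list" where
  "sum_pieces ps qs = [piece_add p q. p \<leftarrow> ps, q \<leftarrow> qs]"

lemma sum_pieces_ne: "ps \<noteq> [] \<Longrightarrow> qs \<noteq> [] \<Longrightarrow> sum_pieces ps qs \<noteq> []"
  unfolding sum_pieces_def by (cases ps; cases qs) auto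

lemma max_aff_sum_pieces:
  assumes "ps \<noteq> []" "qs \<noteq> []"
  shows "max_aff d (sum_pieces ps qs) x = max_aff d ps x + max_aff d qs x"
proof (rule antisym)
  show "max_aff d (sum_pieces ps qs) x \<le> max_aff d ps x + max_aff d qs x"
    by (rule max_aff_le[OF sum_pieces_ne[OF assms]]) (auto simp: sum_pieces_def aff_piece_add intro!: add_mono max_aff_ge)
  obtain p q where "p \<in> set ps" "max_aff d ps x = aff d p x" "q \<in> set qs" "max_aff d qs x = aff d q x"
    using max_aff_attained[OF assms(1)] max_aff_attained[OF assms(2)] by blast
  moreover have "piece_add p q \<in> set (sum_pieces ps qs)"
    using calculation by (auto simp: sum_pieces_def)
  ultimately show "max_aff d ps x + max_aff d qs x \<le> max_aff d (sum_pieces ps qs) x"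
    by (metis aff_piece_add max_aff_ge)
qed

definition is_max_aff_diff :: "nat \<Rightarrow> ((nat \<Rightarrow> real) \<Rightarrow> real) \<Rightarrow> bool" where
  "is_max_aff_diff d \<phi> \<longleftrightarrow>
     (\<exists>ps qs. ps \<noteq> [] \<and> qs \<noteq> [] \<and> (\<forall>x. \<phi> x = max_aff d ps x - max_aff d qs x))"

lemma is_max_aff_diff_aff: "is_max_aff_diff d (aff d p)"
  unfolding is_max_aff_diff_def
  by (rule exI[of _ "[p]"], rule exI[of _ "[zero_piece]"]) simp

lemma is_max_aff_diff_const: "is_max_aff_diff d (\<lambda>x. c)"
proof -
  have "aff d (\<lambda>_. 0, c) = (\<lambda>x. c)" by (simp add: fun_eq_iff aff_def)
  then show ?thesis using is_max_aff_diff_aff by metis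
qed

lemma is_max_aff_diff_coord:
  assumes "j < d"
  shows "is_max_aff_diff d (\<lambda>x. x j)"
proof -
  have "aff d (\<lambda>i. if i = j then 1 else 0, 0) = (\<lambda>x. x j)"
    using assms by (simp add: fun_eq_iff aff_def if_distrib[of "\<lambda>a. a * _"] cong: if_cong)
  then show ?thesis using is_max_aff_diff_aff by metis
qed

lemma is_max_aff_diff_add:
  assumes "is_max_aff_diff d f" "is_max_aff_diff d g"
  shows "is_max_aff_diff d (\<lambda>x. f x + g x)"
proof -
  obtain ps1 qs1 ps2 qs2 where ne: "ps1 \<noteq> []" "qs1 \<noteq> []" "ps2 \<noteq> []" "qs2 \<noteq> []"
    and "\<forall>x. f x = max_aff d ps1 x - max_aff d qs1 x" "\<forall>x. g x = max_aff d ps2 x - max_aff d qs2 x"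
    using assms unfolding is_max_aff_diff_def by metis
  then have "f x + g x = max_aff d (sum_pieces ps1 ps2) x - max_aff d (sum_pieces qs1 qs2) x" for x
    by (simp add: max_aff_sum_pieces)
  moreover have "sum_pieces ps1 ps2 \<noteq> []" "sum_pieces qs1 qs2 \<noteq> []"
    using ne by (simp_all add: sum_pieces_ne)
  ultimately show ?thesis unfolding is_max_aff_diff_def by blast
qed

lemma is_max_aff_diff_scale:
  assumes "is_max_aff_diff d f"
  shows "is_max_aff_diff d (\<lambda>x. c * f x)"
proof -
  obtain ps qs where ne: "ps \<noteq> []" "qs \<noteq> []" and f: "\<forall>x. f x = max_aff d ps x - max_aff d qs x"
    using assms unfolding is_max_aff_diff_def by metis
  have scale: "max_aff d (map (piece_scale a) rs) x = a * max_aff d rs x" if "rs \<noteq> []" "0 \<le> a" for rs a x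
    by (rule max_aff_map_mono[OF that(1)]) (use that(2) in \<open>auto simp: mono_def aff_piece_scale mult_left_mono\<close>)
  show ?thesis
  proof (cases "0 \<le> c")
    case True
    then show ?thesis unfolding is_max_aff_diff_def
      by (intro exI[of _ "map (piece_scale c) ps"] exI[of _ "map (piece_scale c) qs"])
        (simp add: ne f scale right_diff_distrib)
  next
    case False
    then show ?thesis unfolding is_max_aff_diff_def
      by (intro exI[of _ "map (piece_scale (- c)) qs"] exI[of _ "map (piece_scale (- c)) ps"])
        (simp add: ne f scale right_diff_distrib)
  qed
qed

(* max 0 (a - b) = max a b - b *)
lemma is_max_aff_diff_relu:
  assumes "is_max_aff_diff d f"
  shows "is_max_aff_diff d (\<lambda>x. max 0 (f x))"
proof -
  obtain ps qs where ne: "ps \<noteq> []" "qs \<noteq> []" and f: "\<forall>x. f x = max_aff d ps x - max_aff d qs x"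
    using assms unfolding is_max_aff_diff_def by metis
  show ?thesis unfolding is_max_aff_diff_def
    by (intro exI[of _ "ps @ qs"] exI[of _ qs]) (simp add: ne f max_aff_append max_def)
qed

lemma is_max_aff_diff_sum:
  "finite A \<Longrightarrow> (\<And>j. j \<in> A \<Longrightarrow> is_max_aff_diff d (f j)) \<Longrightarrow> is_max_aff_diff d (\<lambda>x. \<Sum>j\<in>A. f j x)"
  by (induction A rule: finite_induct) (auto intro: is_max_aff_diff_const is_max_aff_diff_add)

lemma is_max_aff_diff_affine_map:
  assumes "\<And>j. j < m \<Longrightarrow> is_max_aff_diff d (\<lambda>x. v x j)"
  shows "is_max_aff_diff d (\<lambda>x. affine_map m k L (v x) i)"
proof (cases "i < k")
  case True
  have "is_max_aff_diff d (\<lambda>x. (\<Sum>j<m. fst L i j * v x j) + snd L i)"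
    by (intro is_max_aff_diff_add is_max_aff_diff_sum is_max_aff_diff_scale assms
        is_max_aff_diff_const) auto
  then show ?thesis using True by (simp add: affine_map_def)
next
  case False
  then show ?thesis by (simp add: affine_map_def is_max_aff_diff_const)
qed

lemma is_max_aff_diff_eval_net:
  "Ls \<noteq> [] \<Longrightarrow> (\<And>j. j < m \<Longrightarrow> is_max_aff_diff d (\<lambda>x. v x j)) \<Longrightarrow>
    is_max_aff_diff d (\<lambda>x. eval_net m w k Ls (v x) i)"
proof (induction Ls arbitrary: m v i)
  case (Cons L Ls)
  have layer: "is_max_aff_diff d (\<lambda>x. relu (affine_map m k' L (v x)) j)" for k' j
    unfolding relu_def by (intro is_max_aff_diff_relu is_max_aff_diff_affine_map Cons.prems(2))
  show ?case
  proof (cases Ls)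
    case Nil
    then show ?thesis using layer by simp
  next
    case (Cons L' Ls')
    then show ?thesis using Cons.IH layer by simp
  qed
qed simp

lemma eval_net_nonneg: "Ls \<noteq> [] \<Longrightarrow> 0 \<le> eval_net m w k Ls x i"
  by (induction m w k Ls x rule: eval_net.induct) (auto simp: relu_def)

lemma aff_lower_bound_on_cube:
  assumes "x \<in> unit_cube d"
  shows "snd p - (\<Sum>i<d. \<bar>fst p i\<bar>) \<le> aff d p x"
proof -
  have "- \<bar>fst p i\<bar> \<le> fst p i * x i" if "i < d" for i
  proof -
    have "\<bar>fst p i * x i\<bar> \<le> \<bar>fst p i\<bar>"
      using assms that by (auto simp: unit_cube_def abs_mult mult_left_le)
    then show ?thesis by linarith
  qed
  then have "(\<Sum>i<d. - \<bar>fst p i\<bar>) \<le> (\<Sum>i<d. fst p i * x i)" by (intro sum_mono) auto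
  then show ?thesis unfolding aff_def by (simp add: sum_negf)
qed

lemma max_aff_bounded_below_on_cube:
  assumes "ps \<noteq> []"
  shows "\<exists>B. \<forall>x\<in>unit_cube d. B \<le> max_aff d ps x"
proof -
  have "snd (hd ps) - (\<Sum>i<d. \<bar>fst (hd ps) i\<bar>) \<le> max_aff d ps x" if "x \<in> unit_cube d" for x
    using aff_lower_bound_on_cube[OF that] max_aff_ge[of "hd ps" ps d x] assms
    by (meson hd_in_set order_trans)
  then show ?thesis by blast
qed

lemma relu_net_max_aff_diff:
  assumes "relu_net_computes d w n f"
  shows "\<exists>ps qs. ps \<noteq> [] \<and> qs \<noteq> [] \<and> (\<forall>x\<in>unit_cube d.
           f x = max_aff d ps x - max_aff d qs x \<and> 0 \<le> max_aff d ps x \<and> 0 \<le> max_aff d qs x)"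
proof -
  obtain Ls where "length Ls = n" "n \<ge> 1" and f: "\<forall>x\<in>unit_cube d. f x = eval_net d w 1 Ls x 0"
    using assms unfolding relu_net_computes_def by blast
  then have ne: "Ls \<noteq> []" by auto
  have "is_max_aff_diff d (\<lambda>x. eval_net d w 1 Ls x 0)"
    using is_max_aff_diff_eval_net[OF ne is_max_aff_diff_coord] by simp
  then obtain ps qs where pq: "ps \<noteq> []" "qs \<noteq> []"
    and diff: "\<forall>x. eval_net d w 1 Ls x 0 = max_aff d ps x - max_aff d qs x"
    unfolding is_max_aff_diff_def by blast
  obtain B1 B2 where B: "\<forall>x\<in>unit_cube d. B1 \<le> max_aff d ps x \<and> B2 \<le> max_aff d qs x"
    using max_aff_bounded_below_on_cube[OF pq(1)] max_aff_bounded_below_on_cube[OF pq(2)] by metis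
  define K where "K = \<bar>B1\<bar> + \<bar>B2\<bar>"
  have "f x = max_aff d (map (piece_shift K) ps) x - max_aff d (map (piece_shift K) qs) x
      \<and> 0 \<le> max_aff d (map (piece_shift K) ps) x \<and> 0 \<le> max_aff d (map (piece_shift K) qs) x"
    if "x \<in> unit_cube d" for x
    using B f diff that unfolding max_aff_shift[OF pq(1)] max_aff_shift[OF pq(2)] K_def by fastforce
  then show ?thesis using pq by blast
qed

definition copy_layer :: layer where
  "copy_layer = (\<lambda>i j. if j = i then 1 else 0, \<lambda>i. 0)"

definition update_layer :: "nat \<Rightarrow> nat \<Rightarrow> piece \<Rightarrow> piece \<Rightarrow> layer" where
  "update_layer d k q p =
     (\<lambda>i j. (if j = i then 1 else 0) + (if i = d + k \<and> j < d then fst q j - fst p j else 0),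
      \<lambda>i. if i = d + k then snd q - snd p else 0)"

definition output_layer :: "nat \<Rightarrow> (nat \<Rightarrow> piece) \<Rightarrow> layer" where
  "output_layer d l =
     (\<lambda>i j. (if j < d then fst (l 0) j - fst (l 1) j else 0) + (if j = d then 1 else 0)
            + (if j = Suc d then -1 else 0),
      \<lambda>i. snd (l 0) - snd (l 1))"

fun update_layers :: "nat \<Rightarrow> (nat \<Rightarrow> piece) \<Rightarrow> (nat \<times> piece) list \<Rightarrow> layer list" where
  "update_layers d l [] = [output_layer d l]"
| "update_layers d l ((k, p) # is) = update_layer d k (l k) p # update_layers d (l(k := p)) is"

definition pieces_for :: "nat \<Rightarrow> (nat \<times> piece) list \<Rightarrow> piece list" where
  "pieces_for k is = map snd (filter (\<lambda>u. fst u = k) is)"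

lemma pieces_for_simps [simp]:
  "pieces_for k [] = []"
  "pieces_for k ((j, p) # is) = (if j = k then p # pieces_for k is else pieces_for k is)"
  by (simp_all add: pieces_for_def)

lemma update_layers_Cons: "\<exists>L Ls. update_layers d l is = L # Ls"
  by (cases "is") auto

lemma length_update_layers: "length (update_layers d l is) = Suc (length is)"
  by (induction d l "is" rule: update_layers.induct) (simp_all del: fun_upd_apply)

lemma sum_indicator_mult: "(\<Sum>j<(w::nat). (if j = i then 1 else 0) * (y j :: real)) = (if i < w then y i else 0)"
  by (simp add: if_distrib[of "\<lambda>a. a * _"] cong: if_cong)

lemma sum_lessThan_restrict: "d \<le> w \<Longrightarrow> (\<Sum>j<w. if j < d then g j else 0) = (\<Sum>j<(d::nat). g j)"
proof -
  assume "d \<le> w"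
  then have "{j \<in> {..<w}. j < d} = {..<d}" by auto
  then show ?thesis using sum.inter_filter[of "{..<w}" g "\<lambda>j. j < d", symmetric] by simp
qed

lemma affine_map_update_layer:
  assumes "i < w" "d \<le> w"
  shows "affine_map w w (update_layer d k q p) y i
       = y i + (if i = d + k then (\<Sum>j<d. (fst q j - fst p j) * y j) + snd q - snd p else 0)"
proof -
  have "affine_map w w (update_layer d k q p) y i =
     (\<Sum>j<w. (if j = i then 1 else 0) * y j)
     + (\<Sum>j<w. (if i = d + k \<and> j < d then fst q j - fst p j else 0) * y j)
     + (if i = d + k then snd q - snd p else 0)"
    using assms by (simp add: affine_map_def update_layer_def distrib_right sum.distrib)
  also have "(\<Sum>j<w. (if i = d + k \<and> j < d then fst q j - fst p j else 0) * y j) =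
       (if i = d + k then (\<Sum>j<w. if j < d then (fst q j - fst p j) * y j else 0) else 0)"
    by (cases "i = d + k") (auto intro!: sum.cong)
  finally show ?thesis using assms by (simp add: sum_indicator_mult sum_lessThan_restrict)
qed

lemma affine_map_output_layer:
  assumes "d < w"
  shows "affine_map w 1 (output_layer d l) y 0
       = (\<Sum>j<d. (fst (l 0) j - fst (l 1) j) * y j) + y d - (if Suc d < w then y (Suc d) else 0)
         + snd (l 0) - snd (l 1)"
proof -
  have "affine_map w 1 (output_layer d l) y 0 =
     (\<Sum>j<w. if j < d then (fst (l 0) j - fst (l 1) j) * y j else 0)
     + (\<Sum>j<w. (if j = d then 1 else 0) * y j) - (\<Sum>j<w. (if j = Suc d then 1 else 0) * y j)
     + (snd (l 0) - snd (l 1))"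
    by (simp add: affine_map_def output_layer_def distrib_right sum.distrib sum_subtractf
        if_distrib[where f = "\<lambda>a. a * _"] cong: if_cong)
  then show ?thesis using assms by (simp add: sum_lessThan_restrict sum_indicator_mult)
qed

lemma sum_coeff_diff_eq_aff:
  "\<forall>i<d. y i = x i \<Longrightarrow> (\<Sum>j<d. (fst q j - fst p j) * y j) = (aff d q x - snd q) - (aff d p x - snd p)"
  unfolding aff_def by (simp add: left_diff_distrib sum_subtractf)

(* Unit d + k holds M - l k x, where M is the maximum of the pieces P k read so far and l k is
   the piece read last; relu (M - l k x + l k x - p x) + p x = max M (p x) then reads p. *)
definition tracks_max ::
    "nat \<Rightarrow> nat \<Rightarrow> (nat \<Rightarrow> real) \<Rightarrow> (nat \<Rightarrow> real) \<Rightarrow> (nat \<Rightarrow> piece) \<Rightarrow> (nat \<Rightarrow> piece list) \<Rightarrow> bool" where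
  "tracks_max d w x y l P \<longleftrightarrow> (\<forall>i<d. y i = x i) \<and> (\<forall>i. 0 \<le> y i) \<and> (\<forall>i\<ge>w. y i = 0) \<and>
      (\<forall>k<2. P k \<noteq> [] \<and> y (d + k) + aff d (l k) x = max_aff d (P k) x)"

lemma tracks_max_update_layer:
  assumes "d < w" "k < 2" "d + k < w" and inv: "tracks_max d w x y l P"
  shows "tracks_max d w x (relu (affine_map w w (update_layer d k (l k) p) y)) (l(k := p)) (P(k := P k @ [p]))"
proof -
  let ?y = "relu (affine_map w w (update_layer d k (l k) p) y)"
  have y: "\<forall>i<d. y i = x i" "\<forall>i. 0 \<le> y i" "\<forall>i\<ge>w. y i = 0"
    "\<forall>k<2. P k \<noteq> [] \<and> y (d + k) + aff d (l k) x = max_aff d (P k) x"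
    using inv unfolding tracks_max_def by auto
  have other: "?y i = y i" if "i \<noteq> d + k" for i
  proof (cases "i < w")
    case True
    then show ?thesis using affine_map_update_layer[OF True, of d k "l k" p y] assms(1) that y(2)
      by (simp add: relu_def)
  next
    case False
    then show ?thesis using y(3) by (simp add: relu_def affine_map_def)
  qed
  have old: "P k \<noteq> []" "y (d + k) + aff d (l k) x = max_aff d (P k) x"
    using y(4) assms(2) by auto
  have "?y (d + k) = max 0 (max_aff d (P k) x - aff d p x)"
    using affine_map_update_layer[OF assms(3), of d k "l k" p y] assms(1) old(2)
      sum_coeff_diff_eq_aff[OF y(1), of "l k" p]
    by (simp add: relu_def)
  then have updated: "?y (d + k) + aff d p x = max_aff d (P k @ [p]) x"
    using old by (simp add: max_aff_append max_def)
  show ?thesis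
    unfolding tracks_max_def
  proof (intro conjI allI impI)
    fix k' :: nat assume k': "k' < 2"
    show "(P(k := P k @ [p])) k' \<noteq> []" using y(4) k' by simp
    show "?y (d + k') + aff d ((l(k := p)) k') x = max_aff d ((P(k := P k @ [p])) k') x"
      using updated other[of "d + k'"] y(4) k' by (cases "k' = k") auto
  qed (use other y assms(3) in \<open>auto simp: relu_def\<close>)
qed

lemma output_layer_tracks_max:
  assumes "d < w" "tracks_max d w x y l P"
  shows "relu (affine_map w 1 (output_layer d l) y) 0 = max 0 (max_aff d (P 0) x - max_aff d (P 1) x)"
proof -
  have y: "\<forall>i<d. y i = x i" "\<forall>i\<ge>w. y i = 0" "y d + aff d (l 0) x = max_aff d (P 0) x"
    "y (Suc d) + aff d (l 1) x = max_aff d (P 1) x"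
    using assms(2) unfolding tracks_max_def by (auto dest: spec[of _ 0] spec[of _ 1])
  have "(if Suc d < w then y (Suc d) else 0) = y (Suc d)" using y(2) by auto
  then show ?thesis
    using affine_map_output_layer[OF assms(1), of l y] sum_coeff_diff_eq_aff[OF y(1), of "l 0" "l 1"] y(3,4)
    by (simp add: relu_def)
qed

lemma eval_update_layers:
  assumes "d < w" "tracks_max d w x y l P" "\<forall>(k, p)\<in>set is. k < 2 \<and> d + k < w"
  shows "eval_net w w 1 (update_layers d l is) y 0
       = max 0 (max_aff d (P 0 @ pieces_for 0 is) x - max_aff d (P 1 @ pieces_for 1 is) x)"
  using assms(2,3)
proof (induction "is" arbitrary: y l P)
  case Nil
  then show ?case using output_layer_tracks_max[OF assms(1)] by simp
next
  case (Cons u "is")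
  obtain k p where u: "u = (k, p)" by (cases u)
  let ?y = "relu (affine_map w w (update_layer d k (l k) p) y)"
  have "tracks_max d w x ?y (l(k := p)) (P(k := P k @ [p]))"
    using Cons.prems u assms(1) by (intro tracks_max_update_layer) auto
  then have "eval_net w w 1 (update_layers d (l(k := p)) is) ?y 0
      = max 0 (max_aff d ((P(k := P k @ [p])) 0 @ pieces_for 0 is) x
               - max_aff d ((P(k := P k @ [p])) 1 @ pieces_for 1 is) x)"
    by (rule Cons.IH) (use Cons.prems(2) in simp)
  moreover obtain L Ls where "update_layers d (l(k := p)) is = L # Ls"
    using update_layers_Cons by blast
  then have "eval_net w w 1 (update_layers d l (u # is)) y = eval_net w w 1 (update_layers d (l(k := p)) is) ?y"
    using u by simp
  moreover have "(P(k := P k @ [p])) j @ pieces_for j is = P j @ pieces_for j (u # is)" for j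
    using u by simp
  ultimately show ?case by (simp only:)
qed

lemma copy_layer_tracks_max:
  assumes "d < w" "x \<in> unit_cube d"
  shows "tracks_max d w x (relu (affine_map d w copy_layer x)) l (\<lambda>k. [l k])"
proof -
  have "relu (affine_map d w copy_layer x) i = (if i < d then x i else 0)" for i
    using assms by (auto simp: relu_def affine_map_def copy_layer_def sum_indicator_mult unit_cube_def)
  then show ?thesis
    using assms unfolding tracks_max_def by (auto simp: unit_cube_def)
qed

lemma relu_net_computes_max_aff_diff:
  assumes "d < w" and "1 < length qs \<Longrightarrow> d + 2 \<le> w"
    and "ps \<noteq> []" "qs \<noteq> []" "length ps + length qs \<le> n"
    and f: "\<forall>x\<in>unit_cube d. f x = max 0 (max_aff d ps x - max_aff d qs x)"
  shows "relu_net_computes d w n f"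
proof -
  \<comment> \<open>Reading hd ps again does not change the maximum; it only pads the net to depth n.\<close>
  define "is" where "is = map (Pair (0::nat)) (tl ps) @ map (Pair 1) (tl qs)
      @ replicate (n - (length ps + length qs)) (0, hd ps)"
  define l where "l k = (if k = 0 then hd ps else hd qs)" for k :: nat
  have "d + 1 < w" if "tl qs \<noteq> []" using assms(2) that by (cases qs) auto
  then have units: "\<forall>(k, p)\<in>set is. k < 2 \<and> d + k < w"
    using assms(1) by (fastforce simp: is_def)
  have pieces0: "set (l 0 # pieces_for 0 is) = set ps"
    using assms(3) by (cases ps) (auto simp: is_def l_def pieces_for_def)
  have pieces1: "l 1 # pieces_for 1 is = qs"
    using assms(4) by (cases qs) (auto simp: is_def l_def pieces_for_def comp_def)
  show ?thesis
    unfolding relu_net_computes_def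
  proof (intro exI conjI ballI)
    let ?Ls = "copy_layer # update_layers d l is"
    show "length ?Ls = n" "1 \<le> n"
      using assms(3,4,5) by (cases ps; cases qs; simp add: length_update_layers is_def)+
    fix x assume x: "x \<in> unit_cube d"
    obtain L Ls where "update_layers d l is = L # Ls" using update_layers_Cons by blast
    then have "eval_net d w 1 ?Ls x 0 = eval_net w w 1 (update_layers d l is) (relu (affine_map d w copy_layer x)) 0"
      by simp
    also have "\<dots> = max 0 (max_aff d (l 0 # pieces_for 0 is) x - max_aff d (l 1 # pieces_for 1 is) x)"
      using eval_update_layers[OF assms(1) copy_layer_tracks_max[OF assms(1) x] units] by simp
    also have "\<dots> = f x"
      using f x pieces1 max_aff_cong_set[OF pieces0] by simp
    finally show "f x = eval_net d w 1 ?Ls x 0" ..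
  qed
qed

definition open_box :: "nat \<Rightarrow> (nat \<Rightarrow> real) \<Rightarrow> real \<Rightarrow> (nat \<Rightarrow> real) set" where
  "open_box d c r = {y. (\<forall>i<d. \<bar>y i - c i\<bar> < r) \<and> (\<forall>i\<ge>d. y i = 0)}"

definition coord_closed :: "nat \<Rightarrow> (nat \<Rightarrow> real) set \<Rightarrow> bool" where
  "coord_closed d F \<longleftrightarrow> (\<forall>y. (\<forall>i\<ge>d. y i = 0) \<longrightarrow> y \<notin> F \<longrightarrow> (\<exists>s>0. open_box d y s \<inter> F = {}))"

definition lipschitz_bound :: "nat \<Rightarrow> real \<Rightarrow> ((nat \<Rightarrow> real) \<Rightarrow> real) \<Rightarrow> bool" where
  "lipschitz_bound d L g \<longleftrightarrow>
     (\<forall>y z s. 0 \<le> s \<longrightarrow> (\<forall>i<d. \<bar>z i - y i\<bar> \<le> s) \<longrightarrow> \<bar>g z - g y\<bar> \<le> L * s)"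

definition coord_lipschitz :: "nat \<Rightarrow> ((nat \<Rightarrow> real) \<Rightarrow> real) \<Rightarrow> bool" where
  "coord_lipschitz d g \<longleftrightarrow> (\<exists>L. lipschitz_bound d L g)"

lemma center_in_open_box: "0 < r \<Longrightarrow> (\<lambda>i. if i < d then c i else 0) \<in> open_box d c r"
  by (simp add: open_box_def)

lemma open_box_mono: "r \<le> s \<Longrightarrow> open_box d c r \<subseteq> open_box d c s"
  by (auto simp: open_box_def)

lemma open_box_inside_open_box:
  assumes "y \<in> open_box d c r" "0 < r"
  shows "\<exists>t>0. open_box d y t \<subseteq> open_box d c r"
proof -
  define m where "m = Max (insert 0 ((\<lambda>j. \<bar>y j - c j\<bar>) ` {..<d}))"
  have m: "\<bar>y j - c j\<bar> \<le> m" if "j < d" for j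
    unfolding m_def using that by (intro Max_ge) auto
  have "m \<in> insert 0 ((\<lambda>j. \<bar>y j - c j\<bar>) ` {..<d})"
    unfolding m_def by (intro Max_in) auto
  then have "m < r" using assms by (auto simp: open_box_def)
  have "open_box d y (r - m) \<subseteq> open_box d c r"
  proof
    fix z assume z: "z \<in> open_box d y (r - m)"
    have "\<bar>z j - c j\<bar> < r" if "j < d" for j
    proof -
      have "\<bar>z j - y j\<bar> < r - m" using z that by (simp add: open_box_def)
      then show ?thesis using m[OF that] by arith
    qed
    then show "z \<in> open_box d c r" using z by (simp add: open_box_def)
  qed
  then show ?thesis using \<open>m < r\<close> by (intro exI[of _ "r - m"]) auto
qed

lemma open_box_in_finite_closed_cover:
  assumes "finite I" "0 < r" "open_box d c r \<subseteq> (\<Union>i\<in>I. F i)" "\<forall>i\<in>I. coord_closed d (F i)"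
  shows "\<exists>i\<in>I. \<exists>c' r'. 0 < r' \<and> open_box d c' r' \<subseteq> F i \<and> open_box d c' r' \<subseteq> open_box d c r"
  using assms
proof (induction I arbitrary: c r rule: finite_induct)
  case empty
  then show ?case using center_in_open_box[OF empty.prems(1), of d c] by auto
next
  case (insert a I)
  show ?case
  proof (cases "open_box d c r \<subseteq> F a")
    case True
    then show ?thesis using insert.prems(1) by blast
  next
    case False
    then obtain y where y: "y \<in> open_box d c r" "y \<notin> F a" by auto
    moreover have "\<forall>i\<ge>d. y i = 0" using y(1) by (simp add: open_box_def)
    ultimately obtain s where s: "0 < s" "open_box d y s \<inter> F a = {}"
      using insert.prems(3) unfolding coord_closed_def by blast
    obtain t where t: "0 < t" "open_box d y t \<subseteq> open_box d c r"
      using open_box_inside_open_box[OF y(1) insert.prems(1)] by blast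
    define t' where "t' = min s t"
    have "0 < t'" "t' \<le> s" "t' \<le> t" using s(1) t(1) by (simp_all add: t'_def)
    then have sub: "open_box d y t' \<subseteq> open_box d c r" "open_box d y t' \<inter> F a = {}"
      using t(2) s(2) open_box_mono[of t' t d y] open_box_mono[of t' s d y] by blast+
    then have "open_box d y t' \<subseteq> (\<Union>i\<in>I. F i)" using insert.prems(2) by blast
    moreover have "\<forall>i\<in>I. coord_closed d (F i)" using insert.prems(3) by simp
    ultimately obtain j c' r' where j: "j \<in> I" "0 < r'" "open_box d c' r' \<subseteq> F j"
        and inner: "open_box d c' r' \<subseteq> open_box d y t'"
      using insert.IH[OF \<open>0 < t'\<close>] by blast
    have "open_box d c' r' \<subseteq> open_box d c r" using inner sub(1) by (rule subset_trans)
    then show ?thesis using j by blast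
  qed
qed

lemma lipschitz_bound_nonneg:
  assumes "lipschitz_bound d L g"
  shows "0 \<le> L"
proof -
  have "\<bar>g y - g y\<bar> \<le> L * 1" for y :: "nat \<Rightarrow> real"
    using assms[unfolded lipschitz_bound_def, rule_format, of 1 y y] by simp
  then show ?thesis by simp
qed

lemma coord_lipschitz_add:
  assumes "coord_lipschitz d g" "coord_lipschitz d h"
  shows "coord_lipschitz d (\<lambda>x. g x + h x)"
proof -
  obtain L M where L: "lipschitz_bound d L g" and M: "lipschitz_bound d M h"
    using assms unfolding coord_lipschitz_def by blast
  have "lipschitz_bound d (L + M) (\<lambda>x. g x + h x)"
    unfolding lipschitz_bound_def
  proof (intro allI impI)
    fix y z :: "nat \<Rightarrow> real" and s :: real
    assume "0 \<le> s" "\<forall>i<d. \<bar>z i - y i\<bar> \<le> s"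
    then have "\<bar>g z - g y\<bar> \<le> L * s" "\<bar>h z - h y\<bar> \<le> M * s"
      using L M unfolding lipschitz_bound_def by auto
    then show "\<bar>g z + h z - (g y + h y)\<bar> \<le> (L + M) * s"
      unfolding abs_le_iff distrib_right by linarith
  qed
  then show ?thesis unfolding coord_lipschitz_def by blast
qed

lemma coord_lipschitz_uminus: "coord_lipschitz d g \<Longrightarrow> coord_lipschitz d (\<lambda>x. - g x)"
  unfolding coord_lipschitz_def lipschitz_bound_def by (simp add: abs_minus_commute)

lemma coord_lipschitz_diff:
  "coord_lipschitz d g \<Longrightarrow> coord_lipschitz d h \<Longrightarrow> coord_lipschitz d (\<lambda>x. g x - h x)"
  using coord_lipschitz_add[of d g "\<lambda>x. - h x"] coord_lipschitz_uminus[of d h] by simp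

definition coeff_norm :: "nat \<Rightarrow> piece \<Rightarrow> real" where
  "coeff_norm d p = (\<Sum>i<d. \<bar>fst p i\<bar>)"

lemma lipschitz_bound_aff: "lipschitz_bound d (coeff_norm d p) (aff d p)"
  unfolding lipschitz_bound_def
proof (intro allI impI)
  fix y z :: "nat \<Rightarrow> real" and s :: real
  assume s: "\<forall>i<d. \<bar>z i - y i\<bar> \<le> s"
  have "\<bar>aff d p z - aff d p y\<bar> = \<bar>\<Sum>i<d. fst p i * (z i - y i)\<bar>"
    unfolding aff_def by (simp add: right_diff_distrib sum_subtractf)
  also have "\<dots> \<le> (\<Sum>i<d. \<bar>fst p i * (z i - y i)\<bar>)"
    by (rule sum_abs)
  also have "\<dots> \<le> (\<Sum>i<d. \<bar>fst p i\<bar> * s)"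
    using s by (intro sum_mono) (simp add: abs_mult mult_left_mono)
  finally show "\<bar>aff d p z - aff d p y\<bar> \<le> coeff_norm d p * s"
    by (simp add: coeff_norm_def sum_distrib_right)
qed

lemma coord_lipschitz_aff: "coord_lipschitz d (aff d p)"
  using lipschitz_bound_aff unfolding coord_lipschitz_def by blast

lemma coord_lipschitz_max_aff:
  assumes "ps \<noteq> []"
  shows "coord_lipschitz d (max_aff d ps)"
proof -
  let ?L = "\<Sum>p\<in>set ps. coeff_norm d p"
  have one_side: "max_aff d ps z - max_aff d ps y \<le> ?L * s"
    if "0 \<le> s" "\<forall>i<d. \<bar>z i - y i\<bar> \<le> s" for y z s
  proof -
    obtain p where p: "p \<in> set ps" "max_aff d ps z = aff d p z"
      using max_aff_attained[OF assms] by blast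
    have "\<bar>aff d p z - aff d p y\<bar> \<le> coeff_norm d p * s"
      using lipschitz_bound_aff[of d p] that unfolding lipschitz_bound_def by blast
    also have "\<dots> \<le> ?L * s"
      using p(1) that(1) lipschitz_bound_nonneg[OF lipschitz_bound_aff]
      by (intro mult_right_mono member_le_sum) auto
    finally show ?thesis using p max_aff_ge[OF p(1), of d y] by linarith
  qed
  have "lipschitz_bound d ?L (max_aff d ps)"
    unfolding lipschitz_bound_def
  proof (intro allI impI)
    fix y z :: "nat \<Rightarrow> real" and s :: real
    assume s: "0 \<le> s" "\<forall>i<d. \<bar>z i - y i\<bar> \<le> s"
    then have "\<forall>i<d. \<bar>y i - z i\<bar> \<le> s" by (simp add: abs_minus_commute)
    then have "max_aff d ps y - max_aff d ps z \<le> ?L * s" by (rule one_side[OF s(1)])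
    moreover have "max_aff d ps z - max_aff d ps y \<le> ?L * s" by (rule one_side[OF s])
    ultimately show "\<bar>max_aff d ps z - max_aff d ps y\<bar> \<le> ?L * s"
      unfolding abs_le_iff by linarith
  qed
  then show ?thesis unfolding coord_lipschitz_def by blast
qed

lemma coord_closed_coord_lipschitz_le:
  assumes "coord_lipschitz d g"
  shows "coord_closed d {y. g y \<le> 0}"
  unfolding coord_closed_def
proof (intro allI impI)
  fix y :: "nat \<Rightarrow> real"
  assume "y \<notin> {y. g y \<le> 0}"
  then have pos: "0 < g y" by simp
  obtain L where L: "lipschitz_bound d L g" using assms unfolding coord_lipschitz_def by blast
  have "0 \<le> L" by (rule lipschitz_bound_nonneg[OF L])
  define s where "s = g y / (L + 1)"
  have s: "0 < s" "L * s < g y"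
    using pos \<open>0 \<le> L\<close> by (auto simp: s_def field_simps)
  have "0 < g z" if "z \<in> open_box d y s" for z
  proof -
    have "\<forall>i<d. \<bar>z i - y i\<bar> \<le> s" using that by (auto simp: open_box_def less_imp_le)
    then have "\<bar>g z - g y\<bar> \<le> L * s" using L s(1) unfolding lipschitz_bound_def by auto
    then show ?thesis using s(2) by linarith
  qed
  then have "open_box d y s \<inter> {y. g y \<le> 0} = {}" by fastforce
  then show "\<exists>s>0. open_box d y s \<inter> {y. g y \<le> 0} = {}" using s(1) by blast
qed

lemma closed_dense_contains_unit_cube:
  assumes "coord_closed d F"
    and dense: "\<And>x \<epsilon>. x \<in> unit_cube d \<Longrightarrow> 0 < \<epsilon> \<Longrightarrow> \<exists>y\<in>unit_cube d \<inter> F. \<forall>i<d. \<bar>y i - x i\<bar> < \<epsilon>"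
  shows "unit_cube d \<subseteq> F"
proof
  fix x assume x: "x \<in> unit_cube d"
  show "x \<in> F"
  proof (rule ccontr)
    assume "x \<notin> F"
    moreover have "\<forall>i\<ge>d. x i = 0" using x by (simp add: unit_cube_def)
    ultimately obtain s where "0 < s" "open_box d x s \<inter> F = {}"
      using assms(1) unfolding coord_closed_def by blast
    moreover obtain y where y: "y \<in> unit_cube d \<inter> F" "\<forall>i<d. \<bar>y i - x i\<bar> < s"
      using dense[OF x \<open>0 < s\<close>] by blast
    then have "y \<in> open_box d x s" by (simp add: open_box_def unit_cube_def)
    ultimately show False using y(1) by blast
  qed
qed

lemma open_box_near_point:
  assumes x: "x \<in> unit_cube d" and "0 < \<epsilon>"
  shows "\<exists>c r. 0 < r \<and> open_box d c r \<subseteq> unit_cube d \<and> (\<forall>y\<in>open_box d c r. \<forall>i<d. \<bar>y i - x i\<bar> < \<epsilon>)"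
proof -
  define t where "t = min \<epsilon> 1"
  have t: "0 < t" "t \<le> 1" "t \<le> \<epsilon>" using assms(2) by (auto simp: t_def)
  define c where "c i = (1 - t) * x i + t / 2" for i
  have c: "t / 2 \<le> c i" "c i \<le> 1 - t / 2" "\<bar>c i - x i\<bar> \<le> t / 2" if "i < d" for i
  proof -
    have xi: "0 \<le> x i" "x i \<le> 1" using x that by (auto simp: unit_cube_def)
    then show "t / 2 \<le> c i" "c i \<le> 1 - t / 2"
      using t mult_left_le[of "x i" "1 - t"] by (auto simp: c_def)
    have "c i - x i = t * (1 / 2 - x i)" by (simp add: c_def algebra_simps)
    moreover have "\<bar>1 / 2 - x i\<bar> \<le> 1 / 2" using xi by arith
    ultimately show "\<bar>c i - x i\<bar> \<le> t / 2" using t by (simp add: abs_mult mult_left_le)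
  qed
  have "0 < t / 2" using t by simp
  moreover have "open_box d c (t / 2) \<subseteq> unit_cube d"
  proof
    fix y assume y: "y \<in> open_box d c (t / 2)"
    have "0 \<le> y i \<and> y i \<le> 1" if "i < d" for i
    proof -
      have "\<bar>y i - c i\<bar> < t / 2" using y that by (simp add: open_box_def)
      then show ?thesis using c(1,2)[OF that] by arith
    qed
    then show "y \<in> unit_cube d" using y by (simp add: open_box_def unit_cube_def)
  qed
  moreover have "\<bar>y i - x i\<bar> < \<epsilon>" if "y \<in> open_box d c (t / 2)" "i < d" for y i
  proof -
    have "\<bar>y i - c i\<bar> < t / 2" using that by (simp add: open_box_def)
    then show ?thesis using c(3)[OF that(2)] t(3) by arith
  qed
  ultimately show ?thesis by blast
qed

lemma max_aff_diff_affine_on_sub_box: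
  assumes "ps \<noteq> []" "qs \<noteq> []" "0 < r"
  shows "\<exists>p\<in>set ps. \<exists>q\<in>set qs. \<exists>c' r'. 0 < r' \<and> open_box d c' r' \<subseteq> open_box d c r \<and>
           (\<forall>y\<in>open_box d c' r'. max_aff d ps y = aff d p y \<and> max_aff d qs y = aff d q y)"
proof -
  \<comment> \<open>As each maximum dominates its pieces, R (p, q) is where p and q attain both maxima.\<close>
  define R where "R pq = {y. max_aff d ps y + max_aff d qs y - (aff d (fst pq) y + aff d (snd pq) y) \<le> 0}"
    for pq
  have closed: "coord_closed d (R pq)" for pq
    unfolding R_def
    by (intro coord_closed_coord_lipschitz_le coord_lipschitz_diff coord_lipschitz_add
        coord_lipschitz_max_aff coord_lipschitz_aff assms)
  have cover: "open_box d c r \<subseteq> (\<Union>pq\<in>set ps \<times> set qs. R pq)"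
  proof
    fix y
    obtain p q where "p \<in> set ps" "max_aff d ps y = aff d p y" "q \<in> set qs" "max_aff d qs y = aff d q y"
      using max_aff_attained[OF assms(1)] max_aff_attained[OF assms(2)] by metis
    then show "y \<in> (\<Union>pq\<in>set ps \<times> set qs. R pq)" by (force simp: R_def)
  qed
  have "finite (set ps \<times> set qs)" "\<forall>pq\<in>set ps \<times> set qs. coord_closed d (R pq)"
    using closed by simp_all
  then obtain pq c' r' where pq: "pq \<in> set ps \<times> set qs" and box: "0 < r'" "open_box d c' r' \<subseteq> R pq"
      "open_box d c' r' \<subseteq> open_box d c r"
    using open_box_in_finite_closed_cover[OF _ assms(3) cover] by blast
  have "max_aff d ps y = aff d (fst pq) y \<and> max_aff d qs y = aff d (snd pq) y" if "y \<in> R pq" for y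
    using that pq max_aff_ge[of "fst pq" ps d y] max_aff_ge[of "snd pq" qs d y]
    by (auto simp: R_def mem_Times_iff)
  then show ?thesis
    using pq box by (intro bexI[of _ "fst pq"] bexI[of _ "snd pq"] exI[of _ c'] exI[of _ r']) auto
qed

(* The segment from the centre of the box to z starts inside the box, where f is affine. *)
lemma convex_on_cube_affine_on_box_le:
  assumes conv: "convex_on_cube d f" and "0 < r" and box: "open_box d c r \<subseteq> unit_cube d"
    and eq: "\<forall>y\<in>open_box d c r. f y = aff d u y" and z: "z \<in> unit_cube d"
  shows "aff d u z \<le> f z"
proof -
  define y0 where "y0 i = (if i < d then c i else 0)" for i
  have y0: "y0 \<in> open_box d c r" unfolding y0_def by (rule center_in_open_box[OF assms(2)])
  define t where "t = min (r / 2) (1 / 2)"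
  have t: "0 < t" "t < r" "t \<le> 1" using assms(2) by (auto simp: t_def)
  define q where "q i = t * z i + (1 - t) * y0 i" for i
  have "q \<in> open_box d c r"
    unfolding open_box_def
  proof (intro CollectI conjI allI impI)
    fix i assume i: "i < d"
    have "y0 \<in> unit_cube d" using y0 box by blast
    then have "\<bar>z i - y0 i\<bar> \<le> 1" using z i unfolding unit_cube_def by fastforce
    then have "t * \<bar>z i - y0 i\<bar> \<le> t" using t(1) by (simp add: mult_left_le)
    moreover have "q i - c i = t * (z i - y0 i)" using i by (simp add: q_def y0_def algebra_simps)
    then have "\<bar>q i - c i\<bar> = t * \<bar>z i - y0 i\<bar>" using t(1) by (simp add: abs_mult)
    ultimately show "\<bar>q i - c i\<bar> < r" using t(2) by linarith
  next
    fix i assume "d \<le> i" then show "q i = 0" using z by (simp add: q_def y0_def unit_cube_def)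
  qed
  then have "t * aff d u z + (1 - t) * aff d u y0 = f q"
    using eq unfolding q_def by (simp add: aff_convex_comb)
  also have "\<dots> \<le> t * f z + (1 - t) * f y0"
    using conv z y0 box t(1,3) unfolding convex_on_cube_def q_def by auto
  finally show ?thesis using eq y0 t(1) by simp
qed

lemma convex_max_aff_diff_supporting_piece_near:
  assumes "ps \<noteq> []" "qs \<noteq> []" and f: "\<forall>x\<in>unit_cube d. f x = max_aff d ps x - max_aff d qs x"
    and conv: "convex_on_cube d f" and x: "x \<in> unit_cube d" and "0 < \<epsilon>"
  shows "\<exists>p\<in>set ps. \<exists>q\<in>set qs. (\<forall>z\<in>unit_cube d. aff d (piece_diff p q) z \<le> f z) \<and>
           (\<exists>y\<in>unit_cube d. (\<forall>i<d. \<bar>y i - x i\<bar> < \<epsilon>) \<and> f y = aff d (piece_diff p q) y)"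
proof -
  obtain c r where cr: "0 < r" "open_box d c r \<subseteq> unit_cube d"
      "\<forall>y\<in>open_box d c r. \<forall>i<d. \<bar>y i - x i\<bar> < \<epsilon>"
    using open_box_near_point[OF x \<open>0 < \<epsilon>\<close>] by blast
  then obtain p q c' r' where pq: "p \<in> set ps" "q \<in> set qs"
      and box: "0 < r'" "open_box d c' r' \<subseteq> open_box d c r"
      and affine: "\<forall>y\<in>open_box d c' r'. max_aff d ps y = aff d p y \<and> max_aff d qs y = aff d q y"
    using max_aff_diff_affine_on_sub_box[OF assms(1,2) cr(1)] by metis
  have eq: "\<forall>y\<in>open_box d c' r'. f y = aff d (piece_diff p q) y"
    using affine box cr(2) f by (auto simp: aff_piece_diff)
  then have "\<forall>z\<in>unit_cube d. aff d (piece_diff p q) z \<le> f z"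
    using convex_on_cube_affine_on_box_le[OF conv box(1) _ eq] box cr(2) by blast
  moreover have "(\<lambda>i. if i < d then c' i else 0) \<in> open_box d c' r'"
    by (rule center_in_open_box[OF box(1)])
  ultimately show ?thesis using pq eq box cr by blast
qed

lemma convex_max_aff_diff_is_max_aff:
  assumes "ps \<noteq> []" "qs \<noteq> []" and f: "\<forall>x\<in>unit_cube d. f x = max_aff d ps x - max_aff d qs x"
    and conv: "convex_on_cube d f"
  shows "\<exists>rs. rs \<noteq> [] \<and> (\<forall>x\<in>unit_cube d. f x = max_aff d rs x)"
proof -
  define V where "V = {u \<in> (\<lambda>(p, q). piece_diff p q) ` (set ps \<times> set qs). \<forall>z\<in>unit_cube d. aff d u z \<le> f z}"
  have near: "\<exists>u\<in>V. \<exists>y\<in>unit_cube d. (\<forall>i<d. \<bar>y i - x i\<bar> < \<epsilon>) \<and> f y = aff d u y"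
    if "x \<in> unit_cube d" "0 < \<epsilon>" for x \<epsilon>
    using convex_max_aff_diff_supporting_piece_near[OF assms that] unfolding V_def by fast
  have "finite V" unfolding V_def by auto
  then obtain rs where rs: "set rs = V" using finite_list by blast
  have "rs \<noteq> []" using near[of "\<lambda>_. 0" 1] rs by (auto simp: unit_cube_def)
  define F where "F = {y. max_aff d ps y - max_aff d qs y - max_aff d rs y \<le> 0}"
  have "coord_closed d F"
    unfolding F_def
    by (intro coord_closed_coord_lipschitz_le coord_lipschitz_diff coord_lipschitz_max_aff assms \<open>rs \<noteq> []\<close>)
  moreover have "\<exists>y\<in>unit_cube d \<inter> F. \<forall>i<d. \<bar>y i - x i\<bar> < \<epsilon>"
    if x: "x \<in> unit_cube d" and "0 < \<epsilon>" for x \<epsilon>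
  proof -
    obtain u y where "u \<in> V" "y \<in> unit_cube d" "\<forall>i<d. \<bar>y i - x i\<bar> < \<epsilon>" "f y = aff d u y"
      using near[OF x \<open>0 < \<epsilon>\<close>] by blast
    moreover have "aff d u y \<le> max_aff d rs y" using \<open>u \<in> V\<close> rs by (intro max_aff_ge) simp
    ultimately show ?thesis using f by (auto simp: F_def)
  qed
  ultimately have "unit_cube d \<subseteq> F" by (rule closed_dense_contains_unit_cube)
  moreover have "max_aff d rs x \<le> f x" if "x \<in> unit_cube d" for x
    using \<open>rs \<noteq> []\<close> rs that by (intro max_aff_le) (auto simp: V_def)
  ultimately have "\<forall>x\<in>unit_cube d. f x = max_aff d rs x"
    using f by (force simp: F_def)
  then show ?thesis using \<open>rs \<noteq> []\<close> by blast
qed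

lemma relu_net_computes_nonneg:
  assumes "relu_net_computes d w n f" "x \<in> unit_cube d"
  shows "0 \<le> f x"
proof -
  obtain Ls where "length Ls = n" "n \<ge> 1" and f: "\<forall>x\<in>unit_cube d. f x = eval_net d w 1 Ls x 0"
    using assms(1) unfolding relu_net_computes_def by blast
  then have "Ls \<noteq> []" by auto
  then show ?thesis using f assms(2) eval_net_nonneg[of Ls] by simp
qed

lemma max_affine_eq_max_aff:
  assumes "ps \<noteq> []"
  shows "max_affine d (length ps) (\<lambda>\<alpha>. fst (ps ! (\<alpha> - 1))) (\<lambda>\<alpha>. snd (ps ! (\<alpha> - 1))) x
       = max_aff d ps x"
proof -
  have "(\<lambda>\<alpha>. ps ! (\<alpha> - 1)) ` {1..length ps} = set ps"
  proof
    show "(\<lambda>\<alpha>. ps ! (\<alpha> - 1)) ` {1..length ps} \<subseteq> set ps" by auto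
    show "set ps \<subseteq> (\<lambda>\<alpha>. ps ! (\<alpha> - 1)) ` {1..length ps}"
    proof
      fix p assume "p \<in> set ps"
      then obtain i where "i < length ps" "p = ps ! i" by (auto simp: in_set_conv_nth)
      then show "p \<in> (\<lambda>\<alpha>. ps ! (\<alpha> - 1)) ` {1..length ps}"
        by (intro image_eqI[of _ _ "Suc i"]) auto
    qed
  qed
  then have "(\<lambda>\<alpha>. aff d (ps ! (\<alpha> - 1)) x) ` {1..length ps} = (\<lambda>p. aff d p x) ` set ps"
    using image_image[of "\<lambda>p. aff d p x" "\<lambda>\<alpha>. ps ! (\<alpha> - 1)" "{1..length ps}"] by simp
  moreover have "affine_fun d (fst p) (snd p) x = aff d p x" for p
    by (simp add: affine_fun_def aff_def)
  ultimately show ?thesis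
    unfolding max_affine_def max_aff_def by (simp only:)
qed

lemma max_affine_of_pieces:
  assumes "ps \<noteq> []"
  shows "\<exists>ga gc. \<forall>x. max_affine d (length ps) ga gc x = max_aff d ps x"
  by (intro exI allI) (rule max_affine_eq_max_aff[OF assms])

lemma relu_net_max_affine_diff:
  assumes net: "relu_net_computes d w n f"
  shows "\<exists>N M ga gc ha hc. N \<ge> 1 \<and> M \<ge> 1 \<and>
           (\<forall>x\<in>unit_cube d. f x = max_affine d N ga gc x - max_affine d M ha hc x
                              \<and> max_affine d N ga gc x \<ge> 0 \<and> max_affine d M ha hc x \<ge> 0) \<and>
           relu_net_computes d (d + 3) (2 * (M + N)) f"
proof -
  obtain ps qs where ne: "ps \<noteq> []" "qs \<noteq> []" and dc: "\<forall>x\<in>unit_cube d.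
      f x = max_aff d ps x - max_aff d qs x \<and> 0 \<le> max_aff d ps x \<and> 0 \<le> max_aff d qs x"
    using relu_net_max_aff_diff[OF net] by blast
  then have f: "\<forall>x\<in>unit_cube d. f x = max 0 (max_aff d ps x - max_aff d qs x)"
    using relu_net_computes_nonneg[OF net] by (metis max.absorb2)
  have "relu_net_computes d (d + 3) (2 * (length qs + length ps)) f"
    by (rule relu_net_computes_max_aff_diff[OF _ _ ne _ f]) auto
  moreover obtain ga gc ha hc where "\<forall>x. max_affine d (length ps) ga gc x = max_aff d ps x"
      "\<forall>x. max_affine d (length qs) ha hc x = max_aff d qs x"
    using max_affine_of_pieces[OF ne(1)] max_affine_of_pieces[OF ne(2)] by blast
  ultimately have "length ps \<ge> 1 \<and> length qs \<ge> 1 \<and>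
      (\<forall>x\<in>unit_cube d. f x = max_affine d (length ps) ga gc x - max_affine d (length qs) ha hc x
         \<and> max_affine d (length ps) ga gc x \<ge> 0 \<and> max_affine d (length qs) ha hc x \<ge> 0) \<and>
      relu_net_computes d (d + 3) (2 * (length qs + length ps)) f"
    using ne dc by (simp add: Suc_le_eq)
  then show ?thesis by blast
qed

lemma convex_relu_net_max_affine:
  assumes net: "relu_net_computes d w n f" and conv: "convex_on_cube d f"
  shows "\<exists>N ga gc. N \<ge> 1 \<and> (\<forall>x\<in>unit_cube d. f x = max_affine d N ga gc x) \<and>
           relu_net_computes d (d + 1) N f"
proof -
  obtain ps qs where ne: "ps \<noteq> []" "qs \<noteq> []"
    and "\<forall>x\<in>unit_cube d. f x = max_aff d ps x - max_aff d qs x"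
    using relu_net_max_aff_diff[OF net] by blast
  then obtain rs where rs: "rs \<noteq> []" "\<forall>x\<in>unit_cube d. f x = max_aff d rs x"
    using convex_max_aff_diff_is_max_aff[OF ne _ conv] by blast
  \<comment> \<open>With the single piece zero_piece on the negative side, unit d + 1 is never updated.\<close>
  have "relu_net_computes d (d + 1) (length (hd rs # rs)) f"
    using rs relu_net_computes_nonneg[OF net]
    by (intro relu_net_computes_max_aff_diff[of _ _ "[zero_piece]" rs]) auto
  moreover obtain ga gc where "\<forall>x. max_affine d (length (hd rs # rs)) ga gc x = max_aff d (hd rs # rs) x"
    using max_affine_of_pieces[of "hd rs # rs"] by blast
  moreover have "max_aff d (hd rs # rs) x = max_aff d rs x" for x
    using rs(1) by (intro max_aff_cong_set) auto
  ultimately have "length (hd rs # rs) \<ge> 1 \<and>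
      (\<forall>x\<in>unit_cube d. f x = max_affine d (length (hd rs # rs)) ga gc x) \<and>
      relu_net_computes d (d + 1) (length (hd rs # rs)) f"
    using rs(2) by simp
  then show ?thesis by blast
qed

theorem theorem2:
  fixes d :: nat and f :: "(nat \<Rightarrow> real) \<Rightarrow> real"
  assumes "d \<ge> 1"
    and "\<exists>w n. relu_net_computes d w n f"
  shows "(\<exists>N M ga gc ha hc. N \<ge> 1 \<and> M \<ge> 1 \<and>
           (\<forall>x\<in>unit_cube d. f x = max_affine d N ga gc x - max_affine d M ha hc x
                              \<and> max_affine d N ga gc x \<ge> 0 \<and> max_affine d M ha hc x \<ge> 0) \<and>
           relu_net_computes d (d + 3) (2 * (M + N)) f)
       \<and> (convex_on_cube d f \<longrightarrow>
           (\<exists>N ga gc. N \<ge> 1 \<and> (\<forall>x\<in>unit_cube d. f x = max_affine d N ga gc x) \<and>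
              relu_net_computes d (d + 1) N f))"
  using assms(2) relu_net_max_affine_diff convex_relu_net_max_affine by blast

end
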